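(* Let $G$ be a $(3,4)$-biregular $X,Y$-bigraph in which every vertex of $X$ has degree 3 and every vertex of $Y$ has degree 4. If $G$ has a proper path-factor, then $G$ has an interval coloring using 6 colors (i.e., an interval coloring with colors from $\{1,\dots,6\}$).
   Context: Graphs may have multiple edges. An $X,Y$-bigraph is a bipartite graph with partite sets $X$ and $Y$. A $(3,4)$-biregular bigraph is a bipartite graph in which every vertex of one part has degree 3 and every vertex of the other part has degree 4. A proper path-factor of such a graph $G$ (with $X$ the degree-3 side) is a spanning subgraph of $G$ each of whose components is a path with both endpoints in $X$ and length (number of edges) in $\{2,4,6,8\}$. An interval coloring of a graph is a proper edge-coloring by positive integers such that at every vertex the set of colors on its incident edges is a set of consecutive integers; an interval 6-coloring uses the colors $1,\dots,6$. *)

theory Defs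
  imports Main
begin

text \<open>A bipartite multigraph (X,Y-bigraph): a finite set E of edge identifiers; every
edge e joins the vertex xe e in X to the vertex ye e in Y. Parallel edges are allowed.\<close>

definition bigraph :: "'v set \<Rightarrow> 'v set \<Rightarrow> 'e set \<Rightarrow> ('e \<Rightarrow> 'v) \<Rightarrow> ('e \<Rightarrow> 'v) \<Rightarrow> bool" where
  "bigraph X Y E xe ye \<longleftrightarrow> finite X \<and> finite Y \<and> finite E \<and> X \<inter> Y = {} \<and>
     (\<forall>e\<in>E. xe e \<in> X \<and> ye e \<in> Y)"

definition inc_edges :: "'e set \<Rightarrow> ('e \<Rightarrow> 'v) \<Rightarrow> ('e \<Rightarrow> 'v) \<Rightarrow> 'v \<Rightarrow> 'e set" where
  "inc_edges E xe ye v = {e\<in>E. xe e = v \<or> ye e = v}"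

definition biregular34 :: "'v set \<Rightarrow> 'v set \<Rightarrow> 'e set \<Rightarrow> ('e \<Rightarrow> 'v) \<Rightarrow> ('e \<Rightarrow> 'v) \<Rightarrow> bool" where
  "biregular34 X Y E xe ye \<longleftrightarrow> bigraph X Y E xe ye \<and>
     (\<forall>x\<in>X. card (inc_edges E xe ye x) = 3) \<and> (\<forall>y\<in>Y. card (inc_edges E xe ye y) = 4)"

definition is_path :: "'e set \<Rightarrow> ('e \<Rightarrow> 'v) \<Rightarrow> ('e \<Rightarrow> 'v) \<Rightarrow> 'v list \<Rightarrow> 'e list \<Rightarrow> bool" where
  "is_path E xe ye vs es \<longleftrightarrow> length vs = Suc (length es) \<and> distinct vs \<and>
     (\<forall>i<length es. es ! i \<in> E \<and> {xe (es ! i), ye (es ! i)} = {vs ! i, vs ! Suc i})"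

text \<open>Proper path-factor: a family of vertex-disjoint paths covering all vertices (their
union is the spanning subgraph; its components are exactly these paths), each with both
endpoints in X and length in {2,4,6,8}.\<close>
definition proper_path_factor :: "'v set \<Rightarrow> 'v set \<Rightarrow> 'e set \<Rightarrow> ('e \<Rightarrow> 'v) \<Rightarrow> ('e \<Rightarrow> 'v) \<Rightarrow> bool" where
  "proper_path_factor X Y E xe ye \<longleftrightarrow>
     (\<exists>P :: ('v list \<times> 'e list) set.
        (\<forall>(vs, es)\<in>P. is_path E xe ye vs es \<and> hd vs \<in> X \<and> last vs \<in> X \<and>
                        length es \<in> {2, 4, 6, 8}) \<and>
        (\<forall>p\<in>P. \<forall>q\<in>P. p \<noteq> q \<longrightarrow> set (fst p) \<inter> set (fst q) = {}) \<and>
        (\<Union>p\<in>P. set (fst p)) = X \<union> Y)"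

definition interval_coloring :: "'v set \<Rightarrow> 'e set \<Rightarrow> ('e \<Rightarrow> 'v) \<Rightarrow> ('e \<Rightarrow> 'v) \<Rightarrow> ('e \<Rightarrow> nat) \<Rightarrow> bool" where
  "interval_coloring V E xe ye c \<longleftrightarrow> (\<forall>e\<in>E. c e \<ge> 1) \<and>
     (\<forall>v\<in>V. inj_on c (inc_edges E xe ye v) \<and>
            (\<exists>a b. c ` inc_edges E xe ye v = {a..b}))"

end

theory Submission
  imports Defs
begin

text \<open>Let H (other_edges below) be the set of edges outside the path factor. Every vertex
of Y and every end of a factor path meets two edges of H, every inner X-vertex of a path
exactly one. The paths are coloured with 1, 2, 5, 6 and H with 3 and 4: an inner X-vertex
whose H-edge has colour 3 gets 1 and 2 on its path edges, one whose H-edge has colour 4 gets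
5 and 6. Along a path this gives intervals everywhere as long as the H-colours of the inner
X-vertices change at most once. H is bipartite of maximum degree two, so it can be properly
coloured with 3 and 4; identifying the inner vertices 2 and 6 of every path of length 8
before colouring makes their H-colours differ, and since a path has at most three inner
X-vertices this is enough.\<close>

section \<open>Two-edge-colouring bipartite multigraphs of maximum degree two\<close>

text \<open>A bipartite multigraph is given by its edge set F and the maps fa, fb sending an edge to
its ends on the two sides.\<close>

definition max_degree_le2 :: "'e set \<Rightarrow> ('e \<Rightarrow> 'v) \<Rightarrow> bool" where
  "max_degree_le2 F f \<longleftrightarrow>
     (\<forall>a\<in>F. \<forall>b\<in>F. \<forall>d\<in>F. f a = f b \<and> f b = f d \<longrightarrow> a = b \<or> b = d \<or> a = d)"

lemma max_degree_le2I:
  assumes "\<And>w. \<exists>S. finite S \<and> card S \<le> 2 \<and> {e \<in> F. f e = w} \<subseteq> S"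
  shows "max_degree_le2 F f"
  unfolding max_degree_le2_def
proof (intro ballI impI)
  fix a b d assume abd: "a \<in> F" "b \<in> F" "d \<in> F" "f a = f b \<and> f b = f d"
  obtain S where S: "finite S" "card S \<le> 2" "{e \<in> F. f e = f a} \<subseteq> S" using assms by blast
  then have "card {a, b, d} \<le> 2" using abd by (intro order.trans[OF card_mono S(2)]) auto
  then show "a = b \<or> b = d \<or> a = d" by (auto simp: card_insert_if split: if_splits)
qed

definition proper_2_edge_colouring ::
    "'e set \<Rightarrow> ('e \<Rightarrow> 'v) \<Rightarrow> ('e \<Rightarrow> 'w) \<Rightarrow> ('e \<Rightarrow> bool) \<Rightarrow> bool" where
  "proper_2_edge_colouring F fa fb c \<longleftrightarrow>
     (\<forall>e\<in>F. \<forall>e'\<in>F. e \<noteq> e' \<and> (fa e = fa e' \<or> fb e = fb e') \<longrightarrow> c e \<noteq> c e')"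

lemma max_degree_le2_subset: "max_degree_le2 F f \<Longrightarrow> F' \<subseteq> F \<Longrightarrow> max_degree_le2 F' f"
  unfolding max_degree_le2_def by blast

lemma max_degree_le2_contract:
  assumes deg: "max_degree_le2 F f" and "e' \<in> F"
  shows "max_degree_le2 (F - {e, e'}) (f(g := f e'))"
  unfolding max_degree_le2_def
proof (intro ballI impI)
  let ?f = "f(g := f e')"
  fix a b d assume abd: "a \<in> F - {e, e'}" "b \<in> F - {e, e'}" "d \<in> F - {e, e'}"
    and eq: "?f a = ?f b \<and> ?f b = ?f d"
  have fibre: "x = y" if "x \<in> F - {e, e'}" "y \<in> F - {e, e'}" "f x = f e'" "f y = f e'" for x y
    using deg[unfolded max_degree_le2_def, rule_format, of x y e'] \<open>e' \<in> F\<close> that by auto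
  show "a = b \<or> b = d \<or> a = d"
  proof (rule ccontr)
    assume distinct: "\<not> (a = b \<or> b = d \<or> a = d)"
    show False
    proof (cases "g \<in> {a, b, d}")
      case False
      then have "f a = f b \<and> f b = f d" using eq by auto
      then show False using deg distinct abd unfolding max_degree_le2_def by blast
    next
      case True
      then obtain x y where "x \<in> {a, b, d}" "y \<in> {a, b, d}" "x \<noteq> y" "x \<noteq> g" "y \<noteq> g"
        using distinct by auto
      moreover have "?f x = f e'" "?f y = f e'" if "x \<in> {a, b, d}" "y \<in> {a, b, d}"
        using that True eq by auto
      ultimately show False using fibre[of x y] abd by auto
    qed
  qed
qed

lemma proper_2_edge_colouring_insert:
  assumes "proper_2_edge_colouring (F - {e}) fa fb c"
    and "\<And>g. g \<in> F \<Longrightarrow> g \<noteq> e \<Longrightarrow> fa g = fa e \<or> fb g = fb e \<Longrightarrow> c g \<noteq> b"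
  shows "proper_2_edge_colouring F fa fb (c(e := b))"
  using assms unfolding proper_2_edge_colouring_def by (auto simp: eq_commute)

lemma max_degree_le2_neighbour:
  assumes "max_degree_le2 F f" "e \<in> F" "e' \<in> F" "e' \<noteq> e" "f e' = f e"
    and "h \<in> F" "h \<noteq> e" "f h = f e"
  shows "h = e'"
  using assms(1)[unfolded max_degree_le2_def, rule_format, of h e' e] assms(2-) by auto

lemma proper_2_edge_colouring_insert_path_end:
  assumes c: "proper_2_edge_colouring (F - {e}) fa fb c"
    and fa: "max_degree_le2 F fa" and fb: "max_degree_le2 F fb" and e: "e \<in> F"
    and no_path: "\<not> (\<exists>e' g. e' \<in> F - {e} \<and> g \<in> F - {e} \<and> e' \<noteq> g \<and> fa e' = fa e \<and> fb g = fb e)"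
  shows "\<exists>c'. proper_2_edge_colouring F fa fb c'"
proof -
  have one: "h = h'" if "h \<in> F - {e}" "h' \<in> F - {e}"
    "fa h = fa e \<or> fb h = fb e" "fa h' = fa e \<or> fb h' = fb e" for h h'
    using that no_path max_degree_le2_neighbour[OF fa e, of h h'] max_degree_le2_neighbour[OF fb e, of h h']
    by blast
  obtain b where "\<And>h. h \<in> F \<Longrightarrow> h \<noteq> e \<Longrightarrow> fa h = fa e \<or> fb h = fb e \<Longrightarrow> c h \<noteq> b"
  proof (cases "\<exists>h \<in> F - {e}. fa h = fa e \<or> fb h = fb e")
    case True
    then obtain h0 where "h0 \<in> F - {e}" "fa h0 = fa e \<or> fb h0 = fb e" by blast
    then show ?thesis using one[of _ h0] by (intro that[of "\<not> c h0"]) fastforce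
  qed blast
  from proper_2_edge_colouring_insert[OF c this]
  show ?thesis by (rule exI[of "proper_2_edge_colouring F fa fb"])
qed

text \<open>Contracting the path e' - e - g to the single edge g (which then ends at fb e')
preserves the parity of cycles, so a colouring of the contracted graph lifts back.\<close>

lemma proper_2_edge_colouring_expand_Diff:
  assumes c: "proper_2_edge_colouring (F - {e, e'}) fa (fb(g := fb e')) c"
    and fa: "max_degree_le2 F fa" and fb: "max_degree_le2 F fb"
    and in_F: "e \<in> F" "e' \<in> F" "g \<in> F" and ne: "e' \<noteq> e" "g \<noteq> e" "e' \<noteq> g"
    and ends: "fa e' = fa e" "fb g = fb e"
  shows "proper_2_edge_colouring (F - {e}) fa fb (c(e' := c g))"
  unfolding proper_2_edge_colouring_def
proof (intro ballI impI)
  note fa_nbr = max_degree_le2_neighbour[OF fa in_F(1,2) ne(1) ends(1)]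
  note fb_nbr = max_degree_le2_neighbour[OF fb in_F(1,3) ne(2) ends(2)]
  have fb_e': "fb e' \<noteq> fb e" using fb_nbr[of e'] in_F ne by blast
  fix x y assume x: "x \<in> F - {e}" and y: "y \<in> F - {e}"
    and adj: "x \<noteq> y \<and> (fa x = fa y \<or> fb x = fb y)"
  consider "x \<noteq> e'" "y \<noteq> e'" | "x = e'" | "y = e'" by blast
  then show "(c(e' := c g)) x \<noteq> (c(e' := c g)) y"
  proof cases
    case 1
    have "x \<noteq> g \<and> y \<noteq> g" if "fb x = fb y"
      using fb_nbr[of x] fb_nbr[of y] x y that adj ends by auto
    then have "fa x = fa y \<or> (fb(g := fb e')) x = (fb(g := fb e')) y"
      using adj by auto
    then show ?thesis
      using c[unfolded proper_2_edge_colouring_def, rule_format, of x y] 1 x y adj by auto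
  next
    case 2
    then have "y \<noteq> g" "fb y = fb e'" using adj y fa_nbr[of y] ends fb_e' by auto
    then have "c g \<noteq> c y"
      using c[unfolded proper_2_edge_colouring_def, rule_format, of g y] 2 adj y in_F ne by auto
    then show ?thesis using 2 adj by auto
  next
    case 3
    then have "x \<noteq> g" "fb x = fb e'" using adj x fa_nbr[of x] ends fb_e' by auto
    then have "c x \<noteq> c g"
      using c[unfolded proper_2_edge_colouring_def, rule_format, of x g] 3 adj x in_F ne by auto
    then show ?thesis using 3 adj by auto
  qed
qed

lemma proper_2_edge_colouring_expand:
  assumes c: "proper_2_edge_colouring (F - {e, e'}) fa (fb(g := fb e')) c"
    and fa: "max_degree_le2 F fa" and fb: "max_degree_le2 F fb"
    and in_F: "e \<in> F" "e' \<in> F" "g \<in> F" and ne: "e' \<noteq> e" "g \<noteq> e" "e' \<noteq> g"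
    and ends: "fa e' = fa e" "fb g = fb e"
  shows "proper_2_edge_colouring F fa fb (c(e' := c g, e := \<not> c g))"
proof (rule proper_2_edge_colouring_insert)
  show "proper_2_edge_colouring (F - {e}) fa fb (c(e' := c g))"
    by (rule proper_2_edge_colouring_expand_Diff[OF assms])
  show "(c(e' := c g)) h \<noteq> (\<not> c g)" if "h \<in> F" "h \<noteq> e" "fa h = fa e \<or> fb h = fb e" for h
    using that max_degree_le2_neighbour[OF fa in_F(1,2) ne(1) ends(1), of h]
      max_degree_le2_neighbour[OF fb in_F(1,3) ne(2) ends(2), of h] ne by auto
qed

lemma proper_2_edge_colouring_exists:
  assumes "finite F" "max_degree_le2 F fa" "max_degree_le2 F fb"
  shows "\<exists>c. proper_2_edge_colouring F fa fb c"
  using assms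
proof (induction "card F" arbitrary: F fb rule: less_induct)
  case less
  show ?case
  proof (cases "F = {}")
    case True
    then show ?thesis by (auto simp: proper_2_edge_colouring_def)
  next
    case False
    then obtain e where e: "e \<in> F" by blast
    show ?thesis
    proof (cases "\<exists>e' g. e' \<in> F - {e} \<and> g \<in> F - {e} \<and> e' \<noteq> g \<and> fa e' = fa e \<and> fb g = fb e")
      case True
      then obtain e' g where e'g: "e' \<in> F" "g \<in> F" "e' \<noteq> e" "g \<noteq> e" "e' \<noteq> g"
        "fa e' = fa e" "fb g = fb e" by blast
      have "card (F - {e, e'}) < card F" using less.prems e e'g by (intro psubset_card_mono) auto
      moreover have "max_degree_le2 (F - {e, e'}) fa"
        using less.prems(2) Diff_subset by (rule max_degree_le2_subset)
      moreover have "max_degree_le2 (F - {e, e'}) (fb(g := fb e'))"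
        using less.prems e'g by (intro max_degree_le2_contract)
      ultimately have "\<exists>c. proper_2_edge_colouring (F - {e, e'}) fa (fb(g := fb e')) c"
        using less.prems(1) by (intro less.hyps) auto
      then obtain c where "proper_2_edge_colouring (F - {e, e'}) fa (fb(g := fb e')) c" ..
      from proper_2_edge_colouring_expand[OF this less.prems(2,3) e e'g]
      show ?thesis by (rule exI[of "proper_2_edge_colouring F fa fb"])
    next
      case False
      have "card (F - {e}) < card F" using less.prems e by (intro psubset_card_mono) auto
      moreover have "max_degree_le2 (F - {e}) fa" "max_degree_le2 (F - {e}) fb"
        using less.prems(2,3) by (simp_all add: max_degree_le2_subset)
      ultimately have "\<exists>c. proper_2_edge_colouring (F - {e}) fa fb c"
        using less.prems(1) by (intro less.hyps) auto
      then obtain c where "proper_2_edge_colouring (F - {e}) fa fb c" ..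
      from proper_2_edge_colouring_insert_path_end[OF this less.prems(2,3) e False] show ?thesis .
    qed
  qed
qed

section \<open>Colouring a single path\<close>

text \<open>Edge i of a path of length L joins its vertices i and i + 1, and t j is the colour of
the H-edge at the inner X-vertex j.\<close>

definition good_path_colouring :: "nat \<Rightarrow> (nat \<Rightarrow> nat) \<Rightarrow> (nat \<Rightarrow> nat) \<Rightarrow> bool" where
  "good_path_colouring L t c \<longleftrightarrow>
     c 0 \<in> {2, 5} \<and> c (L - 1) \<in> {2, 5} \<and>
     (\<forall>j. odd j \<and> j < L \<longrightarrow> {c (j - 1), c j} \<in> {{1, 2}, {2, 5}, {5, 6}}) \<and>
     (\<forall>j. even j \<and> 0 < j \<and> j < L \<longrightarrow> {c (j - 1), c j} = (if t j = 3 then {1, 2} else {5, 6}))"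

definition ascending_inner :: "nat \<Rightarrow> (nat \<Rightarrow> nat) \<Rightarrow> bool" where
  "ascending_inner L t \<longleftrightarrow> (\<forall>j. even j \<and> 0 < j \<and> j + 2 < L \<longrightarrow> t j \<le> t (j + 2))"

text \<open>At a Y-vertex between two inner X-vertices the path edges get 2 and 1, 2 and 5, or
6 and 5; only a change of the H-colour from 4 back to 3 would fail, whence the monotonicity
assumption ascending_inner.\<close>

definition ascending_path_colouring :: "nat \<Rightarrow> (nat \<Rightarrow> nat) \<Rightarrow> nat \<Rightarrow> nat" where
  "ascending_path_colouring L t i =
     (if i = 0 then 2 else if i = L - 1 then 5
      else if odd i then (if t (i + 1) = 3 then 1 else 5)
      else if t i = 3 then 2 else 6)"

lemma ascending_path_colouring_odd:
  assumes L: "even L" and t: "\<And>j. even j \<Longrightarrow> 0 < j \<Longrightarrow> j < L \<Longrightarrow> t j \<in> {3, 4}"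
    and asc: "ascending_inner L t" and j: "odd j" "j < L"
  shows "{ascending_path_colouring L t (j - 1), ascending_path_colouring L t j} \<in> {{1, 2}, {2, 5}, {5, 6}}"
proof -
  let ?c = "ascending_path_colouring L t"
  have "j \<noteq> 0" "j - 1 \<noteq> L - 1" using j L by (auto elim: oddE)
  show ?thesis
  proof (cases "j = 1")
    case True
    then have "?c (j - 1) = 2" "?c j \<in> {1, 5}" by (auto simp: ascending_path_colouring_def)
    then show ?thesis by (auto simp: doubleton_eq_iff)
  next
    case j1: False
    then have "even (j - 1)" "0 < j - 1" "j - 1 < L" using j odd_pos by fastforce+
    then have left: "?c (j - 1) = (if t (j - 1) = 3 then 2 else 6)" "t (j - 1) \<in> {3, 4}"
      using \<open>j - 1 \<noteq> L - 1\<close> t by (auto simp: ascending_path_colouring_def)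
    show ?thesis
    proof (cases "j = L - 1")
      case True
      then have "?c j = 5" using \<open>j \<noteq> 0\<close> by (simp add: ascending_path_colouring_def)
      then show ?thesis using left by (auto simp: doubleton_eq_iff)
    next
      case False
      then have "j + 1 < L" "even (j + 1)" using j by auto
      then have "?c j = (if t (j + 1) = 3 then 1 else 5)" "t (j + 1) \<in> {3, 4}"
          "t (j - 1) \<le> t (j + 1)"
        using False \<open>j \<noteq> 0\<close> j1 j t[of "j + 1"]
          asc[unfolded ascending_inner_def, rule_format, of "j - 1"]
        by (auto simp: ascending_path_colouring_def)
      then show ?thesis using left by (auto simp: doubleton_eq_iff)
    qed
  qed
qed

lemma ascending_path_colouring_even:
  assumes "even L" "even j" "0 < j" "j < L"
  shows "{ascending_path_colouring L t (j - 1), ascending_path_colouring L t j} =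
    (if t j = 3 then {1, 2} else {5, 6})"
proof -
  have "j - 1 \<noteq> 0" "j \<noteq> L - 1" "odd (j - 1)" using assms by auto
  then show ?thesis using assms by (auto simp: ascending_path_colouring_def)
qed

lemma good_path_colouring_ascending:
  assumes L: "even L" and t: "\<And>j. even j \<Longrightarrow> 0 < j \<Longrightarrow> j < L \<Longrightarrow> t j \<in> {3, 4}"
    and asc: "ascending_inner L t"
  shows "good_path_colouring L t (ascending_path_colouring L t)"
  unfolding good_path_colouring_def
  using ascending_path_colouring_odd[OF L t asc] ascending_path_colouring_even[OF L]
  by (auto simp: ascending_path_colouring_def)

lemma good_path_colouring_reflect:
  assumes c: "good_path_colouring L (\<lambda>j. 7 - t j) c"
    and t: "\<And>j. even j \<Longrightarrow> 0 < j \<Longrightarrow> j < L \<Longrightarrow> t j \<in> {3, 4}"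
  shows "good_path_colouring L t (\<lambda>i. 7 - c i)"
  unfolding good_path_colouring_def
proof (intro conjI allI impI)
  show "7 - c 0 \<in> {2, 5}" "7 - c (L - 1) \<in> {2, 5}"
    using c by (auto simp: good_path_colouring_def)
  fix j
  assume "odd j \<and> j < L"
  then have "{c (j - 1), c j} \<in> {{1, 2}, {2, 5}, {5, 6}}"
    using c by (auto simp: good_path_colouring_def)
  then show "{7 - c (j - 1), 7 - c j} \<in> {{1, 2}, {2, 5}, {5, 6}}"
    by (simp only: insert_iff doubleton_eq_iff empty_iff) (elim disjE conjE; simp)
next
  fix j
  assume j: "even j \<and> 0 < j \<and> j < L"
  then have "{c (j - 1), c j} = (if 7 - t j = 3 then {1, 2} else {5, 6})"
    using c by (auto simp: good_path_colouring_def)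
  then show "{7 - c (j - 1), 7 - c j} = (if t j = 3 then {1, 2} else {5, 6})"
    using t[of j] j by (cases "t j = 3") (auto simp: doubleton_eq_iff)
qed

text \<open>The reflection c \<mapsto> 7 - c swaps 3 and 4, so it reduces descending H-colours to
ascending ones.\<close>

lemma good_path_colouring_exists:
  assumes L: "even L" and t: "\<And>j. even j \<Longrightarrow> 0 < j \<Longrightarrow> j < L \<Longrightarrow> t j \<in> {3, 4}"
    and monotone: "ascending_inner L t \<or> ascending_inner L (\<lambda>j. 7 - t j)"
  shows "\<exists>c. good_path_colouring L t c"
proof (cases "ascending_inner L t")
  case True
  have "good_path_colouring L t (ascending_path_colouring L t)" 
    by (rule good_path_colouring_ascending[OF L t True])
  then show ?thesis by (rule exI[of "good_path_colouring L t"])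
next
  case False
  have "good_path_colouring L (\<lambda>j. 7 - t j) (ascending_path_colouring L (\<lambda>j. 7 - t j))"
  proof (rule good_path_colouring_ascending[OF L])
    show "7 - t j \<in> {3, 4}" if "even j" "0 < j" "j < L" for j using t[OF that] by auto
    show "ascending_inner L (\<lambda>j. 7 - t j)" using False monotone by simp
  qed
  from good_path_colouring_reflect[OF this t] show ?thesis by (rule exI[of "good_path_colouring L t"])
qed

lemma ascending_inner_if_short:
  assumes "even L" "L \<le> 8" and t: "\<And>j. even j \<Longrightarrow> 0 < j \<Longrightarrow> j < L \<Longrightarrow> t j \<in> {3, 4}"
    and "L = 8 \<Longrightarrow> t 2 \<noteq> t 6"
  shows "ascending_inner L t \<or> ascending_inner L (\<lambda>j. 7 - t j)"
proof -
  have steps: "j = 2 \<and> 4 < L \<or> j = 4 \<and> 6 < L" if "even j" "0 < j" "j + 2 < L" for j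
    using that \<open>L \<le> 8\<close> by (auto elim!: evenE)
  have char: "ascending_inner L s \<longleftrightarrow> (4 < L \<longrightarrow> s 2 \<le> s 4) \<and> (6 < L \<longrightarrow> s 4 \<le> s 6)"
    for s :: "nat \<Rightarrow> nat"
    unfolding ascending_inner_def
  proof
    assume "\<forall>j. even j \<and> 0 < j \<and> j + 2 < L \<longrightarrow> s j \<le> s (j + 2)"
    from this[rule_format, of 2] this[rule_format, of 4]
    show "(4 < L \<longrightarrow> s 2 \<le> s 4) \<and> (6 < L \<longrightarrow> s 4 \<le> s 6)" by simp
  next
    assume s: "(4 < L \<longrightarrow> s 2 \<le> s 4) \<and> (6 < L \<longrightarrow> s 4 \<le> s 6)"
    show "\<forall>j. even j \<and> 0 < j \<and> j + 2 < L \<longrightarrow> s j \<le> s (j + 2)"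
    proof (intro allI impI)
      fix j assume "even j \<and> 0 < j \<and> j + 2 < L"
      then have "j = 2 \<and> 4 < L \<or> j = 4 \<and> 6 < L" using steps by blast
      then show "s j \<le> s (j + 2)" using s by auto
    qed
  qed
  have "L = 8" if "6 < L" using that assms(1,2) by presburger
  then show ?thesis using t[of 2] t[of 4] t[of 6] assms(4) unfolding char by auto
qed

text \<open>The colours at vertex j of a path: those of its path edges, together with t j at an inner
X-vertex and 3, 4 (its two H-edges) everywhere else.\<close>

definition vertex_colours :: "nat \<Rightarrow> (nat \<Rightarrow> nat) \<Rightarrow> (nat \<Rightarrow> nat) \<Rightarrow> nat \<Rightarrow> nat set" where
  "vertex_colours L t c j =
     (if j = 0 then {c 0} else if j = L then {c (L - 1)} else {c (j - 1), c j}) \<union>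
     (if 0 < j \<and> j < L \<and> even j then {t j} else {3, 4})"

lemma end_colours_interval:
  assumes "a \<in> {2, 5}"
  shows "\<exists>lo. {a} \<union> {3, 4} = {lo .. lo + 2::nat}"
proof -
  have "{2} \<union> {3, 4} = {2 .. 2 + 2::nat}" "{5} \<union> {3, 4} = {3 .. 3 + 2::nat}" by auto
  with assms show ?thesis by (elim insertE emptyE) (simp_all add: exI)
qed

lemma middle_colours_interval:
  assumes "{a, b} \<in> {{1, 2}, {2, 5}, {5, 6}}"
  shows "\<exists>lo. {a, b} \<union> {3, 4} = {lo .. lo + 3::nat}"
proof -
  have "{1, 2} \<union> {3, 4} = {1 .. 1 + 3::nat}" "{2, 5} \<union> {3, 4} = {2 .. 2 + 3::nat}"
    "{5, 6} \<union> {3, 4} = {3 .. 3 + 3::nat}" by auto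
  with assms show ?thesis by (elim insertE emptyE) (simp_all only: exI)
qed

lemma inner_colours_interval:
  assumes "t \<in> {3, 4}" "{a, b} = (if t = 3 then {1, 2} else {5, 6})"
  shows "\<exists>lo. {a, b} \<union> {t} = {lo .. lo + 2::nat}"
proof -
  have "{1, 2} \<union> {3} = {1 .. 1 + 2::nat}" "{5, 6} \<union> {4} = {4 .. 4 + 2::nat}" by auto
  with assms show ?thesis by (elim insertE emptyE) (simp_all add: exI)
qed

lemma vertex_colours_interval:
  assumes c: "good_path_colouring L t c" and L: "even L" and j: "j \<le> L"
    and t: "\<And>j. even j \<Longrightarrow> 0 < j \<Longrightarrow> j < L \<Longrightarrow> t j \<in> {3, 4}"
  shows "\<exists>lo. vertex_colours L t c j = {lo .. lo + (if odd j then 3 else 2)}"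
proof -
  consider "j = 0" | "j = L" "j \<noteq> 0" | "0 < j" "j < L" "odd j" | "0 < j" "j < L" "even j"
    using j by linarith
  then show ?thesis
  proof cases
    case 1
    then show ?thesis using c end_colours_interval[of "c 0"]
      by (simp add: vertex_colours_def good_path_colouring_def)
  next
    case 2
    then show ?thesis using c L end_colours_interval[of "c (L - 1)"]
      by (simp add: vertex_colours_def good_path_colouring_def)
  next
    case 3
    then show ?thesis using c middle_colours_interval[of "c (j - 1)" "c j"]
      by (simp add: vertex_colours_def good_path_colouring_def)
  next
    case 4
    then show ?thesis using c t[of j] inner_colours_interval[of "t j" "c (j - 1)" "c j"]
      by (simp add: vertex_colours_def good_path_colouring_def)
  qed
qed

lemma good_path_colouring_range:
  assumes c: "good_path_colouring L t c" and "even L" "i < L"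
  shows "c i \<in> {1, 2, 5, 6}"
proof -
  define j where "j = (if odd i then i else Suc i)"
  have "odd j" "j < L" "i \<in> {j - 1, j}" using assms(2,3) unfolding j_def by (auto elim!: evenE)
  moreover have "{c (j - 1), c j} \<in> {{1, 2}, {2, 5}, {5, 6}}"
    using c \<open>odd j\<close> \<open>j < L\<close> unfolding good_path_colouring_def by blast
  ultimately show ?thesis by auto
qed

section \<open>Path factors\<close>

locale path_factor =
  fixes X Y :: "'v set" and E :: "'e set" and xe ye :: "'e \<Rightarrow> 'v"
    and P :: "('v list \<times> 'e list) set"
  assumes biregular: "biregular34 X Y E xe ye"
    and paths: "\<And>vs es. (vs, es) \<in> P \<Longrightarrow>
      is_path E xe ye vs es \<and> hd vs \<in> X \<and> last vs \<in> X \<and> length es \<in> {2, 4, 6, 8}"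
    and disjoint: "\<And>p q. p \<in> P \<Longrightarrow> q \<in> P \<Longrightarrow> p \<noteq> q \<Longrightarrow> set (fst p) \<inter> set (fst q) = {}"
    and cover: "(\<Union>p\<in>P. set (fst p)) = X \<union> Y"
begin

lemma finite_E: "finite E"
  and X_Y_disjoint: "X \<inter> Y = {}"
  and xe_in_X: "e \<in> E \<Longrightarrow> xe e \<in> X"
  and ye_in_Y: "e \<in> E \<Longrightarrow> ye e \<in> Y"
  and degree_X: "x \<in> X \<Longrightarrow> card (inc_edges E xe ye x) = 3"
  and degree_Y: "y \<in> Y \<Longrightarrow> card (inc_edges E xe ye y) = 4"
  using biregular unfolding biregular34_def bigraph_def by auto

lemma finite_inc_edges: "finite (inc_edges E xe ye v)"
  using finite_E unfolding inc_edges_def by simp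

lemma factor_pathD:
  assumes "(vs, es) \<in> P"
  shows "length vs = Suc (length es)" "distinct vs" "hd vs \<in> X" "length es \<in> {2, 4, 6, 8}"
    and "i < length es \<Longrightarrow> es ! i \<in> E \<and> {xe (es ! i), ye (es ! i)} = {vs ! i, vs ! Suc i}"
  using paths[OF assms] unfolding is_path_def by auto

lemma path_vertex_side:
  assumes "(vs, es) \<in> P" "j \<le> length es"
  shows "vs ! j \<in> X \<longleftrightarrow> even j" "vs ! j \<in> Y \<longleftrightarrow> odd j"
proof -
  have "(vs ! j \<in> X \<longleftrightarrow> even j) \<and> (vs ! j \<in> Y \<longleftrightarrow> odd j)"
    using assms(2)
  proof (induction j)
    case 0
    have "vs ! 0 = hd vs" using factor_pathD(1)[OF assms(1)] by (cases vs) auto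
    then show ?case using factor_pathD(3)[OF assms(1)] X_Y_disjoint by auto
  next
    case (Suc j)
    have "es ! j \<in> E" "{xe (es ! j), ye (es ! j)} = {vs ! j, vs ! Suc j}"
      using factor_pathD(5)[OF assms(1)] Suc.prems by auto
    then have "vs ! j \<in> X \<and> vs ! Suc j \<in> Y \<or> vs ! j \<in> Y \<and> vs ! Suc j \<in> X"
      using xe_in_X ye_in_Y by (metis doubleton_eq_iff)
    then show ?case using Suc X_Y_disjoint by auto
  qed
  then show "vs ! j \<in> X \<longleftrightarrow> even j" "vs ! j \<in> Y \<longleftrightarrow> odd j" by blast+
qed

lemma path_vertex_unique:
  assumes "(vs, es) \<in> P" "(vs', es') \<in> P" "j < length vs" "k < length vs'" "vs ! j = vs' ! k"
  shows "vs' = vs \<and> es' = es \<and> k = j"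
proof -
  have "vs ! j \<in> set (fst (vs, es)) \<inter> set (fst (vs', es'))"
    using nth_mem[OF assms(3)] nth_mem[OF assms(4)] assms(5) by simp
  then have "(vs, es) = (vs', es')" using disjoint assms(1,2) by blast
  then show ?thesis
    using factor_pathD(2)[OF assms(1)] assms(3-5) nth_eq_iff_index_eq by fastforce
qed

lemma path_vertex_exists:
  assumes "v \<in> X \<union> Y"
  obtains vs es j where "(vs, es) \<in> P" "j \<le> length es" "vs ! j = v"
proof -
  obtain vs es where p: "(vs, es) \<in> P" "v \<in> set vs" using assms cover by fastforce
  then obtain j where "j < length vs" "vs ! j = v" by (auto simp: in_set_conv_nth)
  with p show ?thesis using that factor_pathD(1)[OF p(1)] less_Suc_eq_le by auto
qed

lemma path_edge_unique:
  assumes p: "(vs, es) \<in> P" and p': "(vs', es') \<in> P" and i: "i < length es" "i' < length es'"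
    and eq: "es' ! i' = es ! i"
  shows "vs' = vs \<and> es' = es \<and> i' = i"
proof -
  have len: "length vs = Suc (length es)" "length vs' = Suc (length es')"
    using factor_pathD(1) p p' by auto
  have ends: "{vs ! i, vs ! Suc i} = {vs' ! i', vs' ! Suc i'}"
    using factor_pathD(5)[OF p i(1)] factor_pathD(5)[OF p' i(2)] eq by simp
  then have "vs ! i = vs' ! i' \<or> vs ! i = vs' ! Suc i'" by auto
  moreover have "i < length vs" "i' < length vs'" "Suc i' < length vs'" using len i by simp_all
  ultimately have same: "vs' = vs \<and> es' = es"
    using path_vertex_unique[OF p p'] by blast
  from ends same have "vs ! i = vs ! i' \<and> vs ! Suc i = vs ! Suc i' \<or>
      vs ! i = vs ! Suc i' \<and> vs ! Suc i = vs ! i'"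
    by (auto simp: doubleton_eq_iff)
  moreover have "distinct vs" by (rule factor_pathD(2)[OF p])
  ultimately have "i = i' \<or> i = Suc i' \<and> Suc i = i'"
    using len i same by (auto simp: nth_eq_iff_index_eq)
  then show ?thesis using same by auto
qed

definition factor_edges :: "'e set" where
  "factor_edges = {es ! i | vs es i. (vs, es) \<in> P \<and> i < length es}"

definition other_edges :: "'e set" where
  "other_edges = E - factor_edges"

definition other_inc :: "'v \<Rightarrow> 'e set" where
  "other_inc v = inc_edges E xe ye v - factor_edges"

lemma factor_inc_edges:
  assumes p: "(vs, es) \<in> P" and j: "j \<le> length es"
  shows "inc_edges E xe ye (vs ! j) \<inter> factor_edges = {es ! i | i. i < length es \<and> (i = j \<or> Suc i = j)}"
proof (intro equalityI subsetI)
  fix e assume e: "e \<in> inc_edges E xe ye (vs ! j) \<inter> factor_edges"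
  then obtain vs' es' i where p': "(vs', es') \<in> P" "i < length es'" "e = es' ! i"
    unfolding factor_edges_def by blast
  have "vs ! j \<in> {xe e, ye e}" using e unfolding inc_edges_def by auto
  then have "vs ! j = vs' ! i \<or> vs ! j = vs' ! Suc i" using factor_pathD(5)[OF p'(1,2)] p'(3) by auto
  moreover have "j < length vs" "i < length vs'" "Suc i < length vs'"
    using factor_pathD(1) p p' j by auto
  ultimately have "vs' = vs \<and> es' = es \<and> (i = j \<or> Suc i = j)"
    using path_vertex_unique[OF p p'(1)] by blast
  then show "e \<in> {es ! i | i. i < length es \<and> (i = j \<or> Suc i = j)}" using p' by auto
next
  fix e assume "e \<in> {es ! i | i. i < length es \<and> (i = j \<or> Suc i = j)}"
  then obtain i where i: "i < length es" "i = j \<or> Suc i = j" "e = es ! i" by blast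
  then have "e \<in> E" "vs ! j \<in> {xe e, ye e}" using factor_pathD(5)[OF p i(1)] by auto
  moreover have "e \<in> factor_edges" unfolding factor_edges_def using i p by blast
  ultimately show "e \<in> inc_edges E xe ye (vs ! j) \<inter> factor_edges" unfolding inc_edges_def by auto
qed

lemma factor_inc_first:
  assumes "(vs, es) \<in> P"
  shows "inc_edges E xe ye (vs ! 0) \<inter> factor_edges = {es ! 0}"
proof -
  have "length es \<ge> 2" using factor_pathD(4)[OF assms] by auto
  then show ?thesis using factor_inc_edges[OF assms, of 0] by auto
qed

lemma factor_inc_last:
  assumes "(vs, es) \<in> P"
  shows "inc_edges E xe ye (vs ! length es) \<inter> factor_edges = {es ! (length es - 1)}"
proof -
  have "length es \<ge> 2" using factor_pathD(4)[OF assms] by auto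
  then have "{es ! i | i. i < length es \<and> (i = length es \<or> Suc i = length es)} = {es ! (length es - 1)}"
    by (cases "length es") auto
  then show ?thesis using factor_inc_edges[OF assms, of "length es"] by simp
qed

lemma factor_inc_inner:
  assumes p: "(vs, es) \<in> P" and j: "0 < j" "j < length es"
  shows "inc_edges E xe ye (vs ! j) \<inter> factor_edges = {es ! (j - 1), es ! j}"
    and "es ! (j - 1) \<noteq> es ! j"
proof -
  have "es ! (j - 1) \<in> {es ! i | i. i < length es \<and> (i = j \<or> Suc i = j)}"
    using j by (intro CollectI exI[of _ "j - 1"]) simp
  then have "{es ! i | i. i < length es \<and> (i = j \<or> Suc i = j)} = {es ! (j - 1), es ! j}"
    using j by auto
  then show "inc_edges E xe ye (vs ! j) \<inter> factor_edges = {es ! (j - 1), es ! j}"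
    using factor_inc_edges[OF p] j by simp
  show "es ! (j - 1) \<noteq> es ! j"
  proof
    assume "es ! (j - 1) = es ! j"
    moreover have "j - 1 < length es" using j by simp
    ultimately have "j - 1 = j" using path_edge_unique[OF p p j(2)] by blast
    then show False using j by simp
  qed
qed

lemma card_other_inc:
  assumes p: "(vs, es) \<in> P" and j: "j \<le> length es"
  shows "card (other_inc (vs ! j)) = (if 0 < j \<and> j < length es \<and> even j then 1 else 2)"
proof -
  let ?inc = "inc_edges E xe ye (vs ! j)"
  have card: "card (other_inc (vs ! j)) = card ?inc - card (?inc \<inter> factor_edges)"
    unfolding other_inc_def by (rule card_Diff_subset_Int) (simp add: finite_inc_edges)
  have "even (length es)" using factor_pathD(4)[OF p] by auto
  consider "j = 0" | "j = length es" | "0 < j" "j < length es" using j by linarith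
  then show ?thesis
  proof cases
    case 1
    then show ?thesis using card factor_inc_first[OF p] path_vertex_side[OF p j] degree_X by simp
  next
    case 2
    then show ?thesis
      using card factor_inc_last[OF p] path_vertex_side[OF p j] degree_X \<open>even (length es)\<close> by simp
  next
    case 3
    then have "card (?inc \<inter> factor_edges) = 2" using factor_inc_inner[OF p] by simp
    then show ?thesis using card 3 path_vertex_side[OF p j] degree_X degree_Y by auto
  qed
qed

lemma finite_other_edges: "finite other_edges"
  unfolding other_edges_def using finite_E by simp

lemma finite_other_inc: "finite (other_inc v)"
  unfolding other_inc_def using finite_inc_edges by simp

lemma other_edge_in_other_inc: "h \<in> other_edges \<Longrightarrow> h \<in> other_inc (xe h) \<and> h \<in> other_inc (ye h)"
  unfolding other_edges_def other_inc_def inc_edges_def by simp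

lemma other_inc_X: "v \<in> X \<Longrightarrow> other_inc v = {h \<in> other_edges. xe h = v}"
  unfolding other_inc_def other_edges_def inc_edges_def using X_Y_disjoint ye_in_Y by auto

lemma other_inc_Y: "v \<in> Y \<Longrightarrow> other_inc v = {h \<in> other_edges. ye h = v}"
  unfolding other_inc_def other_edges_def inc_edges_def using X_Y_disjoint xe_in_X by auto

lemma card_other_inc_le2: "card (other_inc v) \<le> 2"
proof (cases "v \<in> X \<union> Y")
  case True
  then obtain vs es j where "(vs, es) \<in> P" "j \<le> length es" "vs ! j = v" by (rule path_vertex_exists)
  then show ?thesis using card_other_inc by fastforce
next
  case False
  then have "other_inc v = {}"
    unfolding other_inc_def inc_edges_def using xe_in_X ye_in_Y by auto
  then show ?thesis by simp
qed

lemma other_inc_inner: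
  assumes p: "(vs, es) \<in> P" and j: "0 < j" "j < length es" "even j"
  obtains h where "other_inc (vs ! j) = {h}" "h \<in> other_edges" "xe h = vs ! j"
proof -
  have "card (other_inc (vs ! j)) = 1" using card_other_inc[OF p] j by simp
  then obtain h where h: "other_inc (vs ! j) = {h}" by (rule card_1_singletonE)
  have "vs ! j \<in> X" using path_vertex_side[OF p] j by simp
  then show ?thesis using that h other_inc_X by auto
qed

text \<open>Identifying the inner vertices 2 and 6 of every path of length 8 forces their H-edges
to get different colours, the hypothesis of ascending_inner_if_short for L = 8.\<close>

definition glue :: "'v \<Rightarrow> 'v" where
  "glue x = (if \<exists>vs es. (vs, es) \<in> P \<and> length es = 8 \<and> vs ! 6 = x
     then (SOME vs. \<exists>es. (vs, es) \<in> P \<and> length es = 8 \<and> vs ! 6 = x) ! 2 else x)"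

lemma glue_6:
  assumes p: "(vs, es) \<in> P" "length es = 8"
  shows "glue (vs ! 6) = vs ! 2"
proof -
  let ?Q = "\<lambda>vs'. \<exists>es'. (vs', es') \<in> P \<and> length es' = 8 \<and> vs' ! 6 = vs ! 6"
  have "?Q vs" using p by blast
  then obtain es' where es': "(SOME vs'. ?Q vs', es') \<in> P" "length es' = 8"
      "(SOME vs'. ?Q vs') ! 6 = vs ! 6"
    using someI[of ?Q] by blast
  moreover have "length (SOME vs'. ?Q vs') = 9" "length vs = 9"
    using factor_pathD(1) p es' by auto
  ultimately have "(SOME vs'. ?Q vs') = vs"
    using path_vertex_unique[OF es'(1) p(1), of 6 6] by simp
  then show ?thesis unfolding glue_def using p by auto
qed

lemma glue_cases:
  "glue x = x \<or> (\<exists>vs es. (vs, es) \<in> P \<and> length es = 8 \<and> x = vs ! 6 \<and> glue x = vs ! 2)"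
proof (cases "\<exists>vs es. (vs, es) \<in> P \<and> length es = 8 \<and> vs ! 6 = x")
  case True
  then obtain vs es where "(vs, es) \<in> P" "length es = 8" "x = vs ! 6" by blast
  then show ?thesis using glue_6 by blast
next
  case False
  then show ?thesis unfolding glue_def by auto
qed

lemma glue_2:
  assumes p: "(vs, es) \<in> P" "length es = 8"
  shows "glue (vs ! 2) = vs ! 2"
proof (rule ccontr)
  assume "glue (vs ! 2) \<noteq> vs ! 2"
  then obtain vs' es' where p': "(vs', es') \<in> P" "length es' = 8" "vs ! 2 = vs' ! 6"
    using glue_cases by metis
  moreover have "length vs = 9" "length vs' = 9" using factor_pathD(1) p p' by auto
  ultimately show False using path_vertex_unique[OF p(1) p'(1), of 2 6] by simp
qed

lemma max_degree_le2_ye: "max_degree_le2 other_edges ye"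
proof (rule max_degree_le2I)
  fix w
  have "{h \<in> other_edges. ye h = w} \<subseteq> other_inc w" using other_edge_in_other_inc by auto
  then show "\<exists>S. finite S \<and> card S \<le> 2 \<and> {h \<in> other_edges. ye h = w} \<subseteq> S"
    using finite_other_inc card_other_inc_le2 by blast
qed

lemma max_degree_le2_glue: "max_degree_le2 other_edges (\<lambda>h. glue (xe h))"
proof (rule max_degree_le2I)
  fix w
  let ?fibre = "{h \<in> other_edges. glue (xe h) = w}"
  show "\<exists>S. finite S \<and> card S \<le> 2 \<and> ?fibre \<subseteq> S"
  proof (cases "\<exists>vs es. (vs, es) \<in> P \<and> length es = 8 \<and> vs ! 2 = w")
    case True
    then obtain vs es where p: "(vs, es) \<in> P" "length es = 8" "vs ! 2 = w" by blast
    have "xe h = vs ! 2 \<or> xe h = vs ! 6" if "glue (xe h) = w" for h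
      using glue_cases[of "xe h"]
    proof
      assume "\<exists>vs' es'. (vs', es') \<in> P \<and> length es' = 8 \<and> xe h = vs' ! 6 \<and> glue (xe h) = vs' ! 2"
      then obtain vs' es' where p': "(vs', es') \<in> P" "length es' = 8" "xe h = vs' ! 6"
          "glue (xe h) = vs' ! 2"
        by blast
      moreover have "vs' ! 2 = vs ! 2" using p'(4) that p(3) by simp
      moreover have "length vs = 9" "length vs' = 9" using factor_pathD(1) p p' by auto
      ultimately show ?thesis using path_vertex_unique[OF p(1) p'(1), of 2 2] by simp
    qed (use that p in simp)
    then have "?fibre \<subseteq> other_inc (vs ! 2) \<union> other_inc (vs ! 6)"
      using other_edge_in_other_inc by fastforce
    moreover have "card (other_inc (vs ! 2) \<union> other_inc (vs ! 6)) \<le> 2"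
      using card_Un_le[of "other_inc (vs ! 2)" "other_inc (vs ! 6)"]
        card_other_inc[OF p(1), of 2] card_other_inc[OF p(1), of 6] p(2) by simp
    ultimately show ?thesis using finite_other_inc by blast
  next
    case False
    have "xe h = w" if "glue (xe h) = w" for h
      using glue_cases[of "xe h"] that False by metis
    then have "?fibre \<subseteq> other_inc w" using other_edge_in_other_inc by fastforce
    then show ?thesis using finite_other_inc card_other_inc_le2 by blast
  qed
qed

end


section \<open>The interval colouring\<close>

locale coloured_path_factor = path_factor X Y E xe ye P
  for X Y :: "'v set" and E :: "'e set" and xe ye :: "'e \<Rightarrow> 'v" and P +
  fixes hcolour :: "'e \<Rightarrow> nat"
  assumes hcolour_range: "h \<in> other_edges \<Longrightarrow> hcolour h \<in> {3, 4}"
    and hcolour_proper: "\<lbrakk>h \<in> other_edges; h' \<in> other_edges; h \<noteq> h';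
      glue (xe h) = glue (xe h') \<or> ye h = ye h'\<rbrakk> \<Longrightarrow> hcolour h \<noteq> hcolour h'"
begin

definition inner_colour :: "'v \<Rightarrow> nat" where
  "inner_colour v = hcolour (SOME h. h \<in> other_inc v)"

definition path_colouring :: "'v list \<Rightarrow> 'e list \<Rightarrow> nat \<Rightarrow> nat" where
  "path_colouring vs es = (SOME c. good_path_colouring (length es) (\<lambda>j. inner_colour (vs ! j)) c)"

definition colouring :: "'e \<Rightarrow> nat" where
  "colouring e = (if e \<in> factor_edges
     then (SOME k. \<exists>vs es i. (vs, es) \<in> P \<and> i < length es \<and> es ! i = e \<and> k = path_colouring vs es i)
     else hcolour e)"

lemma inner_colour_eq: "other_inc v = {h} \<Longrightarrow> inner_colour v = hcolour h"
  unfolding inner_colour_def by simp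

lemma inner_colour_range:
  assumes "(vs, es) \<in> P" "0 < j" "j < length es" "even j"
  shows "inner_colour (vs ! j) \<in> {3, 4}"
proof -
  obtain h where "other_inc (vs ! j) = {h}" "h \<in> other_edges"
    using other_inc_inner[OF assms] by blast
  then show ?thesis using inner_colour_eq hcolour_range by simp
qed

lemma inner_colour_2_6:
  assumes p: "(vs, es) \<in> P" "length es = 8"
  shows "inner_colour (vs ! 2) \<noteq> inner_colour (vs ! 6)"
proof -
  obtain h2 where h2: "other_inc (vs ! 2) = {h2}" "h2 \<in> other_edges" "xe h2 = vs ! 2"
    using other_inc_inner[OF p(1), of 2] p(2) by auto
  obtain h6 where h6: "other_inc (vs ! 6) = {h6}" "h6 \<in> other_edges" "xe h6 = vs ! 6"
    using other_inc_inner[OF p(1), of 6] p(2) by auto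
  have "vs ! 2 \<noteq> vs ! 6"
    using factor_pathD(1,2)[OF p(1)] p(2) by (simp add: nth_eq_iff_index_eq)
  then have "h2 \<noteq> h6" using h2 h6 by auto
  moreover have "glue (xe h2) = glue (xe h6)" using h2(3) h6(3) glue_2[OF p] glue_6[OF p] by simp
  ultimately show ?thesis using hcolour_proper h2 h6 inner_colour_eq by simp
qed

lemma path_colouring_good:
  assumes p: "(vs, es) \<in> P"
  shows "good_path_colouring (length es) (\<lambda>j. inner_colour (vs ! j)) (path_colouring vs es)"
proof -
  have L: "even (length es)" "length es \<le> 8" using factor_pathD(4)[OF p] by auto
  have t: "\<And>j. even j \<Longrightarrow> 0 < j \<Longrightarrow> j < length es \<Longrightarrow> inner_colour (vs ! j) \<in> {3, 4}"
    using inner_colour_range[OF p] by blast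
  have "length es = 8 \<Longrightarrow> inner_colour (vs ! 2) \<noteq> inner_colour (vs ! 6)"
    by (rule inner_colour_2_6[OF p])
  from good_path_colouring_exists[OF L(1) t ascending_inner_if_short[OF L t this]]
  show ?thesis unfolding path_colouring_def by (rule someI_ex)
qed

lemma colouring_factor_edge:
  assumes p: "(vs, es) \<in> P" and i: "i < length es"
  shows "colouring (es ! i) = path_colouring vs es i"
proof -
  let ?Q = "\<lambda>k. \<exists>vs' es' i'. (vs', es') \<in> P \<and> i' < length es' \<and> es' ! i' = es ! i \<and>
    k = path_colouring vs' es' i'"
  have "?Q (path_colouring vs es i)" using p i by blast
  then obtain vs' es' i' where q: "(vs', es') \<in> P" "i' < length es'" "es' ! i' = es ! i"
      "(SOME k. ?Q k) = path_colouring vs' es' i'"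
    using someI[of ?Q] by blast
  then have "(SOME k. ?Q k) = path_colouring vs es i"
    using path_edge_unique[OF p q(1) i q(2) q(3)] by simp
  moreover have "es ! i \<in> factor_edges" unfolding factor_edges_def using p i by blast
  ultimately show ?thesis unfolding colouring_def by simp
qed

lemma colouring_other_edge: "h \<in> other_edges \<Longrightarrow> colouring h = hcolour h"
  unfolding colouring_def other_edges_def by simp

lemma colouring_other_inc:
  assumes p: "(vs, es) \<in> P" and j: "j \<le> length es"
  shows "colouring ` other_inc (vs ! j) =
    (if 0 < j \<and> j < length es \<and> even j then {inner_colour (vs ! j)} else {3, 4})"
proof (cases "0 < j \<and> j < length es \<and> even j")
  case True
  then obtain h where "other_inc (vs ! j) = {h}" "h \<in> other_edges"
    using other_inc_inner[OF p] by blast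
  then show ?thesis using True inner_colour_eq colouring_other_edge by simp
next
  case False
  then have "card (other_inc (vs ! j)) = 2" using card_other_inc[OF p j] by simp
  then obtain h h' where hh: "other_inc (vs ! j) = {h, h'}" "h \<noteq> h'" by (meson card_2_iff)
  then have "h \<in> other_inc (vs ! j)" "h' \<in> other_inc (vs ! j)" by auto
  moreover have "vs ! j \<in> X \<or> vs ! j \<in> Y" using path_vertex_side[OF p j] by blast
  ultimately have "h \<in> other_edges" "h' \<in> other_edges" "xe h = xe h' \<or> ye h = ye h'"
    using other_inc_X other_inc_Y by auto
  then have "hcolour h \<noteq> hcolour h'" "hcolour h \<in> {3, 4}" "hcolour h' \<in> {3, 4}"
    using hcolour_proper hh(2) hcolour_range by metis+
  then have "{hcolour h, hcolour h'} = {3, 4}" by auto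
  moreover have "colouring ` other_inc (vs ! j) = {hcolour h, hcolour h'}"
    using hh colouring_other_edge \<open>h \<in> other_edges\<close> \<open>h' \<in> other_edges\<close> by simp
  ultimately show ?thesis unfolding if_not_P[OF False] by simp
qed

lemma colouring_factor_inc:
  assumes p: "(vs, es) \<in> P" and j: "j \<le> length es"
  shows "colouring ` (inc_edges E xe ye (vs ! j) \<inter> factor_edges) =
    (if j = 0 then {path_colouring vs es 0}
     else if j = length es then {path_colouring vs es (length es - 1)}
     else {path_colouring vs es (j - 1), path_colouring vs es j})"
proof -
  have L: "2 \<le> length es" using factor_pathD(4)[OF p] by auto
  consider "j = 0" | "j = length es" | "0 < j" "j < length es" using j by linarith
  then show ?thesis
  proof cases
    case 1
    have "0 < length es" using L by linarith
    then show ?thesis using 1 factor_inc_first[OF p] colouring_factor_edge[OF p] by simp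
  next
    case 2
    have "length es - 1 < length es" "length es \<noteq> 0" using L by linarith+
    then show ?thesis using 2 factor_inc_last[OF p] colouring_factor_edge[OF p] by simp
  next
    case 3
    then show ?thesis using factor_inc_inner(1)[OF p] colouring_factor_edge[OF p] by simp
  qed
qed

lemma colouring_inc_edges:
  assumes p: "(vs, es) \<in> P" and j: "j \<le> length es"
  shows "colouring ` inc_edges E xe ye (vs ! j) =
    vertex_colours (length es) (\<lambda>j. inner_colour (vs ! j)) (path_colouring vs es) j"
proof -
  have "inc_edges E xe ye (vs ! j) = (inc_edges E xe ye (vs ! j) \<inter> factor_edges) \<union> other_inc (vs ! j)"
    unfolding other_inc_def by blast
  then have "colouring ` inc_edges E xe ye (vs ! j) =
      colouring ` (inc_edges E xe ye (vs ! j) \<inter> factor_edges) \<union> colouring ` other_inc (vs ! j)"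
    by (metis image_Un)
  then show ?thesis
    unfolding vertex_colours_def colouring_factor_inc[OF p j] colouring_other_inc[OF p j] .
qed

lemma colouring_interval:
  assumes "v \<in> X \<union> Y"
  shows "inj_on colouring (inc_edges E xe ye v) \<and> (\<exists>a b. colouring ` inc_edges E xe ye v = {a..b})"
proof -
  obtain vs es j where p: "(vs, es) \<in> P" and j: "j \<le> length es" "vs ! j = v"
    using assms by (rule path_vertex_exists)
  have "even (length es)" using factor_pathD(4)[OF p] by auto
  then obtain a where a: "colouring ` inc_edges E xe ye v = {a .. a + (if odd j then 3 else 2)}"
    using vertex_colours_interval[OF path_colouring_good[OF p]] inner_colour_range[OF p]
      colouring_inc_edges[OF p j(1)] j by fastforce
  have "card (inc_edges E xe ye v) = (if odd j then 4 else 3)"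
    using path_vertex_side[OF p j(1)] degree_X degree_Y j(2) by auto
  then have "card (colouring ` inc_edges E xe ye v) = card (inc_edges E xe ye v)"
    unfolding a by simp
  then show ?thesis using eq_card_imp_inj_on[OF finite_inc_edges] a by blast
qed

lemma colouring_range:
  assumes "e \<in> E"
  shows "colouring e \<in> {1..6}"
proof (cases "e \<in> factor_edges")
  case True
  then obtain vs es i where p: "(vs, es) \<in> P" "i < length es" "e = es ! i"
    unfolding factor_edges_def by blast
  have "even (length es)" using factor_pathD(4)[OF p(1)] by auto
  then show ?thesis
    using good_path_colouring_range[OF path_colouring_good[OF p(1)]] colouring_factor_edge p by fastforce
next
  case False
  then show ?thesis using assms hcolour_range colouring_other_edge unfolding other_edges_def by fastforce
qed

end

theorem mainTheorem2:
  fixes X Y :: "'v set" and E :: "'e set" and xe ye :: "'e \<Rightarrow> 'v"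
  assumes "biregular34 X Y E xe ye"
    and "proper_path_factor X Y E xe ye"
  shows "\<exists>c. interval_coloring (X \<union> Y) E xe ye c \<and> (\<forall>e\<in>E. c e \<in> {1..6})"
proof -
  obtain P :: "('v list \<times> 'e list) set" where
    "\<forall>(vs, es)\<in>P. is_path E xe ye vs es \<and> hd vs \<in> X \<and> last vs \<in> X \<and> length es \<in> {2, 4, 6, 8}"
    "\<forall>p\<in>P. \<forall>q\<in>P. p \<noteq> q \<longrightarrow> set (fst p) \<inter> set (fst q) = {}"
    "(\<Union>p\<in>P. set (fst p)) = X \<union> Y"
    using assms(2) unfolding proper_path_factor_def by blast
  with assms(1) interpret path_factor X Y E xe ye P
    by unfold_locales blast+
  obtain c2 where c2: "proper_2_edge_colouring other_edges (\<lambda>h. glue (xe h)) ye c2"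
    using proper_2_edge_colouring_exists[OF finite_other_edges max_degree_le2_glue max_degree_le2_ye]
    by blast
  interpret coloured_path_factor X Y E xe ye P "\<lambda>h. if c2 h then 3 else 4"
    by unfold_locales (use c2 in \<open>auto simp: proper_2_edge_colouring_def\<close>)
  have "interval_coloring (X \<union> Y) E xe ye colouring"
    unfolding interval_coloring_def using colouring_interval colouring_range by fastforce
  then show ?thesis using colouring_range by blast
qed

end
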